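(* Let $x,y\in\Gamma_2$ with $y\in\mathcal C(x)$, $y\ne e$, and suppose $\mathcal R_y=\emptyset$, so that $y$ is represented by a unique geodesic word $w_1w_2\cdots w_n$. Let $a\in A\cap\mathcal C(x)$. Then $xy\in\mathcal C(e,xa)$ if and only if $w_1=a$.
   Context: $\Gamma_2=\langle a,b,c,d\mid aba^{-1}b^{-1}cdc^{-1}d^{-1}\rangle$ with symmetric generating set $A=\{a^{\pm1},b^{\pm1},c^{\pm1},d^{\pm1}\}$, word metric $d$ and word length $|\cdot|$ (here $a$ in the statement denotes an arbitrary element of $A$). The cone type of $x$ is $\mathcal C(x)=\{z:\ |xz|=|x|+|z|\}$. For vertices $x,y$, the cone $\mathcal C(x,y)=\{z\in\Gamma_2: d(x,z)=d(x,y)+d(y,z)\}$. A word belongs to $\mathcal R$ if it is a nonempty subword of length at most $4$ of a cyclic permutation of the relator $aba^{-1}b^{-1}cdc^{-1}d^{-1}$ or of its inverse. For $y\in\Gamma_2$, $\mathcal R_y$ is the set of all length-4 subwords $w_iw_{i+1}w_{i+2}w_{i+3}$ belonging to $\mathcal R$, taken over all geodesic words $w_1\cdots w_n$ representing $y$. *)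

theory Defs
  imports Main
begin

text \<open>Elements are represented by words over the symmetric generating set A;
  two words represent the same group element iff they are related by
  the congruence generated by free reduction and by the relator.
  The identity e is represented by the empty word.\<close>

datatype gen = Ga | Gb | Gc | Gd

type_synonym letter = "gen \<times> bool"   \<comment> \<open>(g, True) = g, (g, False) = g^-1\<close>
type_synonym word = "letter list"

definition inv_letter :: "letter \<Rightarrow> letter" where
  "inv_letter l = (fst l, \<not> snd l)"

definition inv_word :: "word \<Rightarrow> word" where
  "inv_word w = rev (map inv_letter w)"

definition relator :: word where
  "relator = [(Ga,True),(Gb,True),(Ga,False),(Gb,False),
              (Gc,True),(Gd,True),(Gc,False),(Gd,False)]"

inductive elem_step :: "word \<Rightarrow> word \<Rightarrow> bool" where
  cancel: "elem_step (u @ [l, inv_letter l] @ v) (u @ v)"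
| rel: "elem_step (u @ relator @ v) (u @ v)"

definition geq :: "word \<Rightarrow> word \<Rightarrow> bool" where
  "geq = (\<lambda>u v. elem_step u v \<or> elem_step v u)\<^sup>*\<^sup>*"

definition wlen :: "word \<Rightarrow> nat" where
  "wlen w = (LEAST n. \<exists>v. geq v w \<and> length v = n)"

definition wdist :: "word \<Rightarrow> word \<Rightarrow> nat" where
  "wdist u v = wlen (inv_word u @ v)"

definition geodesic :: "word \<Rightarrow> bool" where
  "geodesic w \<longleftrightarrow> length w = wlen w"

definition gens :: "word set" where
  "gens = {[l] | l. True}"

definition cone_type :: "word \<Rightarrow> word set" where
  "cone_type x = {z. wlen (x @ z) = wlen x + wlen z}"

definition cone :: "word \<Rightarrow> word \<Rightarrow> word set" where
  "cone x y = {z. wdist x z = wdist x y + wdist y z}"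

definition Rwords :: "word set" where
  "Rwords = {s. s \<noteq> [] \<and> length s \<le> 4 \<and>
     (\<exists>k p q. rotate k relator = p @ s @ q \<or> rotate k (inv_word relator) = p @ s @ q)}"

definition Rset :: "word \<Rightarrow> word set" where
  "Rset y = {s. length s = 4 \<and> s \<in> Rwords \<and>
     (\<exists>v p q. geq v y \<and> geodesic v \<and> v = p @ s @ q)}"

end

theory Submission
  imports Defs
begin

text \<open>The presentation of \<open>\<Gamma>\<^sub>2\<close> admits a finite complete rewriting system: the eight free
  cancellations together with eight length-preserving rules, each replacing a length-4 piece of a
  cyclic conjugate of the relator (or of its inverse) by the complementary piece. The rules decrease
  in the length-lexicographic order, and all critical pairs have equal normal forms, so by Newman's
  lemma every element of \<open>\<Gamma>\<^sub>2\<close> has exactly one irreducible representative. A geodesic word can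
  only be reducible by a length-preserving rule, whose left-hand side would then be an element of
  \<open>\<R>\<^sub>y\<close>; so if \<open>\<R>\<^sub>y = \<emptyset>\<close>, every geodesic representative of \<open>y\<close> is irreducible and hence equal
  to \<open>w\<close>. Finally \<open>xa\<close> lies on a geodesic from \<open>e\<close> to \<open>xy\<close> iff \<open>|a\<inverse>y| = |y| - 1\<close>, and then
  \<open>a\<close> followed by a geodesic word for \<open>a\<inverse>y\<close> is a geodesic word for \<open>y\<close>, which must be \<open>w\<close>.\<close>

section \<open>Abstract rewriting\<close>

definition joinable :: "('a \<Rightarrow> 'a \<Rightarrow> bool) \<Rightarrow> 'a \<Rightarrow> 'a \<Rightarrow> bool" where
  "joinable r u v \<longleftrightarrow> (\<exists>z. r\<^sup>*\<^sup>* u z \<and> r\<^sup>*\<^sup>* v z)"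

lemma joinable_sym: "joinable r u v \<Longrightarrow> joinable r v u"
  unfolding joinable_def by blast

lemma joinable_trans_rtranclp:
  "r\<^sup>*\<^sup>* u v \<Longrightarrow> joinable r v w \<Longrightarrow> joinable r u w"
  unfolding joinable_def by (meson rtranclp_trans)

lemma newman:
  assumes wf: "wf {(y, x). r x y}"
    and local_confluent: "\<And>x y z. r x y \<Longrightarrow> r x z \<Longrightarrow> joinable r y z"
  shows "r\<^sup>*\<^sup>* x y \<Longrightarrow> r\<^sup>*\<^sup>* x z \<Longrightarrow> joinable r y z"
  using wf
proof (induction x arbitrary: y z rule: wf_induct_rule)
  case (less x)
  from less.prems(1) show ?case
  proof (cases rule: converse_rtranclpE)
    case base
    with less.prems(2) show ?thesis unfolding joinable_def by blast
  next
    case (step y')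
    note xy' = this
    from less.prems(2) show ?thesis
    proof (cases rule: converse_rtranclpE)
      case base
      with less.prems(1) show ?thesis unfolding joinable_def by blast
    next
      case (step z')
      note xz' = this
      obtain u where y'u: "r\<^sup>*\<^sup>* y' u" and z'u: "r\<^sup>*\<^sup>* z' u"
        using local_confluent[OF xy'(1) xz'(1)] unfolding joinable_def by blast
      obtain v where yv: "r\<^sup>*\<^sup>* y v" and uv: "r\<^sup>*\<^sup>* u v"
        using less.IH[OF _ xy'(2) y'u] xy'(1) unfolding joinable_def by blast
      have "joinable r v z"
        using less.IH[OF _ rtranclp_trans[OF z'u uv] xz'(2)] xz'(1) by blast
      then show ?thesis by (rule joinable_trans_rtranclp[OF yv])
    qed
  qed
qed

lemma equivclp_joinable:
  assumes confluent: "\<And>x y z. r\<^sup>*\<^sup>* x y \<Longrightarrow> r\<^sup>*\<^sup>* x z \<Longrightarrow> joinable r y z"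
    and "equivclp r u v"
  shows "joinable r u v"
  using assms(2)
proof (induction rule: equivclp_induct)
  case base
  show ?case unfolding joinable_def by blast
next
  case (step v v')
  obtain d where ud: "r\<^sup>*\<^sup>* u d" and vd: "r\<^sup>*\<^sup>* v d"
    using step.IH unfolding joinable_def by blast
  from step.hyps(2) show ?case
  proof
    assume "r v v'"
    then have "joinable r d v'" by (rule confluent[OF vd r_into_rtranclp])
    then show ?thesis by (rule joinable_trans_rtranclp[OF ud])
  next
    assume "r v' v"
    then have "r\<^sup>*\<^sup>* v' d" using vd by (rule converse_rtranclp_into_rtranclp)
    then show ?thesis using ud unfolding joinable_def by blast
  qed
qed

lemma rtranclp_from_normal_form:
  assumes "r\<^sup>*\<^sup>* u z" and "\<nexists>u'. r u u'"
  shows "z = u"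
  using assms(1) by (cases rule: converse_rtranclpE) (use assms(2) in blast)+

lemma equivclp_normal_forms_eq:
  assumes confluent: "\<And>x y z. r\<^sup>*\<^sup>* x y \<Longrightarrow> r\<^sup>*\<^sup>* x z \<Longrightarrow> joinable r y z"
    and "equivclp r u v" and "\<nexists>u'. r u u'" and "\<nexists>v'. r v v'"
  shows "u = v"
proof -
  have "joinable r u v"
    using confluent assms(2) by (rule equivclp_joinable)
  then obtain z where uz: "r\<^sup>*\<^sup>* u z" and vz: "r\<^sup>*\<^sup>* v z"
    unfolding joinable_def by blast
  show ?thesis
    using rtranclp_from_normal_form[OF uz assms(3)] rtranclp_from_normal_form[OF vz assms(4)]
    by simp
qed

section \<open>String rewriting\<close>

inductive srs_step :: "('a list \<times> 'a list) set \<Rightarrow> 'a list \<Rightarrow> 'a list \<Rightarrow> bool"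
  for R :: "('a list \<times> 'a list) set" where
  "(l, r) \<in> R \<Longrightarrow> srs_step R (p @ l @ q) (p @ r @ q)"

lemma srs_step_append_context:
  assumes "srs_step R u v"
  shows "srs_step R (p @ u @ q) (p @ v @ q)"
  using assms
proof cases
  case (1 l r p' q')
  then show ?thesis using srs_step.intros[of l r R "p @ p'" "q' @ q"] by simp
qed

lemma srs_steps_append_context:
  "(srs_step R)\<^sup>*\<^sup>* u v \<Longrightarrow> (srs_step R)\<^sup>*\<^sup>* (p @ u @ q) (p @ v @ q)"
  by (induction rule: rtranclp_induct)
    (simp, metis rtranclp.rtrancl_into_rtrancl srs_step_append_context)

lemma joinable_append_context:
  "joinable (srs_step R) u v \<Longrightarrow> joinable (srs_step R) (p @ u @ q) (p @ v @ q)"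
  unfolding joinable_def by (meson srs_steps_append_context)

definition critical_pairs_joinable :: "('a list \<times> 'a list) set \<Rightarrow> bool" where
  "critical_pairs_joinable R \<longleftrightarrow>
    (\<forall>(l1, r1) \<in> R. \<forall>(l2, r2) \<in> R. \<forall>m t s.
      (l1 = m @ t \<and> l2 = t @ s \<and> t \<noteq> [] \<longrightarrow> joinable (srs_step R) (r1 @ s) (m @ r2)) \<and>
      (l1 = m @ l2 @ s \<longrightarrow> joinable (srs_step R) r1 (m @ r2 @ s)))"

lemma append_eq_append_cases:
  assumes "xs @ ys = zs @ ts"
  obtains (left) us where "zs = xs @ us" "ys = us @ ts"
    | (right) us where "xs = zs @ us" "us @ ys = ts" "us \<noteq> []"
proof -
  obtain us where "xs = zs @ us \<and> us @ ys = ts \<or> xs @ us = zs \<and> ys = us @ ts"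
    using assms by (auto simp: append_eq_append_conv2)
  then show thesis using left right by (cases "us = []") auto
qed

lemma srs_peak_joinable:
  assumes cp: "critical_pairs_joinable R"
    and w: "p1 @ l1 @ q1 = p2 @ l2 @ q2" and R1: "(l1, r1) \<in> R" and R2: "(l2, r2) \<in> R"
    and le: "length p1 \<le> length p2"
  shows "joinable (srs_step R) (p1 @ r1 @ q1) (p2 @ r2 @ q2)"
proof -
  obtain m where p2: "p2 = p1 @ m" and rest: "l1 @ q1 = m @ l2 @ q2"
    using w le by (cases rule: append_eq_append_cases) auto
  from rest show ?thesis
  proof (cases rule: append_eq_append_cases)
    case (left m')
    have "srs_step R (p1 @ r1 @ q1) (p1 @ r1 @ m' @ r2 @ q2)"
      using srs_step.intros[OF R2, of "p1 @ r1 @ m'" q2] left by simp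
    moreover have "srs_step R (p2 @ r2 @ q2) (p1 @ r1 @ m' @ r2 @ q2)"
      using srs_step.intros[OF R1, of p1 "m' @ r2 @ q2"] p2 left by simp
    ultimately show ?thesis unfolding joinable_def by (blast intro: r_into_rtranclp)
  next
    case (right t)
    from \<open>t @ q1 = l2 @ q2\<close> show ?thesis
    proof (cases rule: append_eq_append_cases)
      case (left s)
      then have "joinable (srs_step R) (r1 @ s) (m @ r2)"
        using cp R1 R2 right unfolding critical_pairs_joinable_def by blast
      from joinable_append_context[OF this, of p1 q2] show ?thesis
        using p2 left by simp
    next
      case (right s)
      then have "joinable (srs_step R) r1 (m @ r2 @ s)"
        using cp R1 R2 \<open>l1 = m @ t\<close> unfolding critical_pairs_joinable_def by blast
      from joinable_append_context[OF this, of p1 q1] show ?thesis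
        using p2 right by simp
    qed
  qed
qed

lemma srs_local_confluence:
  assumes "critical_pairs_joinable R" and "srs_step R w w1" and "srs_step R w w2"
  shows "joinable (srs_step R) w1 w2"
proof -
  obtain p1 l1 r1 q1 where w1: "w = p1 @ l1 @ q1" "w1 = p1 @ r1 @ q1" "(l1, r1) \<in> R"
    using assms(2) by cases auto
  obtain p2 l2 r2 q2 where w2: "w = p2 @ l2 @ q2" "w2 = p2 @ r2 @ q2" "(l2, r2) \<in> R"
    using assms(3) by cases auto
  have w: "p1 @ l1 @ q1 = p2 @ l2 @ q2" using w1 w2 by simp
  show ?thesis
  proof (cases "length p1 \<le> length p2")
    case True
    then show ?thesis using srs_peak_joinable[OF assms(1) w] w1 w2 by simp
  next
    case False
    then have "joinable (srs_step R) (p2 @ r2 @ q2) (p1 @ r1 @ q1)"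
      using srs_peak_joinable[OF assms(1) w[symmetric] w2(3) w1(3)] by simp
    then show ?thesis using w1(2) w2(2) by (auto dest: joinable_sym)
  qed
qed

lemma srs_step_lenlex:
  assumes "irrefl S" and decreasing: "\<And>l r. (l, r) \<in> R \<Longrightarrow> (r, l) \<in> lenlex S"
    and "srs_step R u v"
  shows "(v, u) \<in> lenlex S"
  using assms(3)
proof cases
  case (1 l r p q)
  have "(r @ q, l @ q) \<in> lenlex S"
    using decreasing[OF 1(3)] by (rule lenlex_append1) simp
  then show ?thesis using 1 assms(1) by simp
qed

lemma srs_confluent:
  assumes "wf S" and "\<And>l r. (l, r) \<in> R \<Longrightarrow> (r, l) \<in> lenlex S"
    and "critical_pairs_joinable R"
    and "(srs_step R)\<^sup>*\<^sup>* x y" and "(srs_step R)\<^sup>*\<^sup>* x z"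
  shows "joinable (srs_step R) y z"
proof -
  have "irrefl S" using assms(1) by (simp add: irreflI)
  then have "{(v, u). srs_step R u v} \<subseteq> lenlex S"
    using srs_step_lenlex assms(2) by blast
  then have "wf {(v, u). srs_step R u v}"
    using wf_lenlex[OF assms(1)] wf_subset by blast
  then show ?thesis
    using srs_local_confluence[OF assms(3)] assms(4,5) by (rule newman[where r = "srs_step R"])
qed

fun rewrite_prefix :: "('a list \<times> 'a list) list \<Rightarrow> 'a list \<Rightarrow> 'a list option" where
  "rewrite_prefix [] w = None"
| "rewrite_prefix ((l, r) # rs) w =
    (if take (length l) w = l then Some (r @ drop (length l) w) else rewrite_prefix rs w)"

fun rewrite_leftmost :: "('a list \<times> 'a list) list \<Rightarrow> 'a list \<Rightarrow> 'a list option" where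
  "rewrite_leftmost rs [] = None"
| "rewrite_leftmost rs (c # w) =
    (case rewrite_prefix rs (c # w) of
      Some w' \<Rightarrow> Some w'
    | None \<Rightarrow> map_option ((#) c) (rewrite_leftmost rs w))"

text \<open>The fuel \<open>n\<close> bounds the number of steps, so the result need not be irreducible; this is
  harmless, as only equality of two results is ever used.\<close>

fun normalize :: "('a list \<times> 'a list) list \<Rightarrow> nat \<Rightarrow> 'a list \<Rightarrow> 'a list" where
  "normalize rs 0 w = w"
| "normalize rs (Suc n) w =
    (case rewrite_leftmost rs w of None \<Rightarrow> w | Some w' \<Rightarrow> normalize rs n w')"

lemma rewrite_prefix_srs_step:
  "rewrite_prefix rs w = Some w' \<Longrightarrow> srs_step (set rs) w w'"
proof (induction rs)
  case (Cons lr rs)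
  obtain l r where lr: "lr = (l, r)" by fastforce
  show ?case
  proof (cases "take (length l) w = l")
    case True
    then obtain q where w: "w = l @ q" by (metis append_take_drop_id)
    then have "w' = r @ q" using Cons.prems True lr by simp
    then show ?thesis using w lr srs_step.intros[of l r "set (lr # rs)" "[]" q] by simp
  next
    case False
    then have "srs_step (set rs) w w'" using Cons lr by simp
    then show ?thesis by cases (auto intro: srs_step.intros)
  qed
qed simp

lemma rewrite_leftmost_srs_step:
  "rewrite_leftmost rs w = Some w' \<Longrightarrow> srs_step (set rs) w w'"
proof (induction w arbitrary: w')
  case (Cons c w)
  show ?case
  proof (cases "rewrite_prefix rs (c # w)")
    case None
    with Cons.prems obtain u where "rewrite_leftmost rs w = Some u" "w' = c # u" by auto
    then show ?thesis using Cons.IH srs_step_append_context[of _ w u "[c]" "[]"] by simp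
  qed (use Cons.prems rewrite_prefix_srs_step in auto)
qed simp

lemma srs_steps_normalize: "(srs_step (set rs))\<^sup>*\<^sup>* w (normalize rs n w)"
proof (induction n arbitrary: w)
  case (Suc n)
  then show ?case
    by (cases "rewrite_leftmost rs w")
      (auto intro: converse_rtranclp_into_rtranclp rewrite_leftmost_srs_step)
qed simp

definition critical_pairs_check :: "nat \<Rightarrow> ('a list \<times> 'a list) list \<Rightarrow> bool" where
  "critical_pairs_check n rs \<longleftrightarrow>
    list_all (\<lambda>(l1, r1). list_all (\<lambda>(l2, r2).
      list_all (\<lambda>k. take (length l1 - k) l2 = drop k l1 \<longrightarrow>
          normalize rs n (r1 @ drop (length l1 - k) l2) = normalize rs n (take k l1 @ r2))
        [0..<length l1] \<and>
      list_all (\<lambda>k. take (length l2) (drop k l1) = l2 \<longrightarrow>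
          normalize rs n r1 = normalize rs n (take k l1 @ r2 @ drop (k + length l2) l1))
        [0..<Suc (length l1 - length l2)]) rs) rs"

lemma joinable_if_normalize_eq:
  assumes "normalize rs n u = normalize rs n v"
  shows "joinable (srs_step (set rs)) u v"
  unfolding joinable_def using srs_steps_normalize[of rs u n] srs_steps_normalize[of rs v n] assms
  by auto

lemma critical_pairs_check_joinable:
  assumes "critical_pairs_check n rs"
  shows "critical_pairs_joinable (set rs)"
  unfolding critical_pairs_joinable_def
proof (intro ballI allI, clarify)
  fix l1 r1 l2 r2 m t s
  assume R1: "(l1, r1) \<in> set rs" and R2: "(l2, r2) \<in> set rs"
  note check = bspec[OF bspec[OF assms[unfolded critical_pairs_check_def list_all_iff] R1,
        unfolded prod.case] R2, unfolded prod.case]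
  show "(l1 = m @ t \<and> l2 = t @ s \<and> t \<noteq> [] \<longrightarrow> joinable (srs_step (set rs)) (r1 @ s) (m @ r2)) \<and>
     (l1 = m @ l2 @ s \<longrightarrow> joinable (srs_step (set rs)) r1 (m @ r2 @ s))"
  proof (intro conjI impI)
    assume "l1 = m @ t \<and> l2 = t @ s \<and> t \<noteq> []"
    then have "normalize rs n (r1 @ s) = normalize rs n (m @ r2)"
      using bspec[OF conjunct1[OF check], of "length m"] by simp
    then show "joinable (srs_step (set rs)) (r1 @ s) (m @ r2)"
      by (rule joinable_if_normalize_eq)
  next
    assume "l1 = m @ l2 @ s"
    then have "normalize rs n r1 = normalize rs n (m @ r2 @ s)"
      using bspec[OF conjunct2[OF check], of "length m"] by simp
    then show "joinable (srs_step (set rs)) r1 (m @ r2 @ s)"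
      by (rule joinable_if_normalize_eq)
  qed
qed

section \<open>Equality in \<open>\<Gamma>\<^sub>2\<close>\<close>

lemma geq_eq_equivclp: "geq = equivclp elem_step"
  unfolding geq_def equivclp_def symclp_def ..

lemma geq_refl: "geq u u"
  by (simp add: geq_eq_equivclp)

lemma geq_sym: "geq u v \<Longrightarrow> geq v u"
  by (simp add: geq_eq_equivclp equivclp_sym)

lemma geq_trans [trans]: "geq u v \<Longrightarrow> geq v w \<Longrightarrow> geq u w"
  unfolding geq_eq_equivclp by (rule equivclp_trans)

lemma elem_step_append_context:
  assumes "elem_step u v"
  shows "elem_step (p @ u @ q) (p @ v @ q)"
  using assms
proof cases
  case (cancel u' l v')
  then show ?thesis using elem_step.cancel[of "p @ u'" l "v' @ q"] by simp
next
  case (rel u' v')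
  then show ?thesis using elem_step.rel[of "p @ u'" "v' @ q"] by simp
qed

lemma geq_append_context: "geq u v \<Longrightarrow> geq (p @ u @ q) (p @ v @ q)"
  unfolding geq_eq_equivclp
  by (induction rule: equivclp_induct)
    (simp, metis equivclp_into_equivclp elem_step_append_context)

lemma geq_append: "geq u u' \<Longrightarrow> geq v v' \<Longrightarrow> geq (u @ v) (u' @ v')"
  using geq_append_context[of u u' "[]" v] geq_append_context[of v v' u' "[]"] geq_trans
  by simp

lemma geq_cancel: "geq (p @ [l, inv_letter l] @ q) (p @ q)"
  unfolding geq_eq_equivclp by (blast intro: elem_step.cancel)

lemma inv_letter_inv_letter [simp]: "inv_letter (inv_letter l) = l"
  by (simp add: inv_letter_def)

lemma inv_word_inv_word [simp]: "inv_word (inv_word y) = y"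
  by (simp add: inv_word_def rev_map comp_def)

lemma geq_cancel_Cons: "geq (l # inv_letter l # u) u"
  using geq_cancel[of "[]" l u] by simp

lemma geq_cancel_Cons_inv: "geq (inv_letter l # l # u) u"
  using geq_cancel_Cons[of "inv_letter l" u] by simp

lemma geq_append_inv_word: "geq (y @ inv_word y) []"
proof (induction y)
  case (Cons c y)
  have "geq ([c] @ (y @ inv_word y) @ [inv_letter c]) ([c] @ [] @ [inv_letter c])"
    using Cons by (rule geq_append_context)
  then show ?case
    using geq_cancel[of "[]" c "[]"] geq_trans by (simp add: inv_word_def)
qed (simp add: inv_word_def geq_refl)

lemma geq_inv_word_append: "geq (inv_word y @ y) []"
  using geq_append_inv_word[of "inv_word y"] by simp

lemma geq_if_append_inv_word_Nil:
  assumes "geq (l @ inv_word r) []"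
  shows "geq l r"
proof -
  have "geq l (l @ inv_word r @ r)"
    using geq_append_context[OF geq_sym[OF geq_inv_word_append[of r]], of l "[]"] by simp
  also have "geq \<dots> ([] @ r)"
    using geq_append_context[OF assms, of "[]" r] by simp
  finally show ?thesis by simp
qed

lemma geq_Nil_append_swap:
  assumes "geq (x @ y) []"
  shows "geq (y @ x) []"
proof -
  have "geq (y @ x) (y @ (x @ y) @ inv_word y)"
    using geq_append_context[OF geq_sym[OF geq_append_inv_word[of y]], of "y @ x" "[]"] by simp
  also have "geq \<dots> (y @ [] @ inv_word y)"
    using assms by (rule geq_append_context)
  also have "geq \<dots> []"
    using geq_append_inv_word by simp
  finally show ?thesis .
qed

lemma geq_Nil_rotate: "geq xs [] \<Longrightarrow> geq (rotate k xs) []"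
  by (simp add: rotate_drop_take geq_Nil_append_swap)

lemma geq_relator: "geq relator []"
  unfolding geq_eq_equivclp using elem_step.rel[of "[]" "[]"] by auto

lemma geq_inv_relator: "geq (inv_word relator) []"
proof -
  have "geq (inv_word relator) (inv_word relator @ relator)"
    using geq_append_context[OF geq_sym[OF geq_relator], of "inv_word relator" "[]"] by simp
  also have "geq \<dots> []" by (rule geq_inv_word_append)
  finally show ?thesis .
qed

section \<open>A complete rewriting system for \<open>\<Gamma>\<^sub>2\<close>\<close>

abbreviation "la \<equiv> (Ga, True)"  abbreviation "lA \<equiv> (Ga, False)"
abbreviation "lb \<equiv> (Gb, True)"  abbreviation "lB \<equiv> (Gb, False)"
abbreviation "lc \<equiv> (Gc, True)"  abbreviation "lC \<equiv> (Gc, False)"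
abbreviation "ld \<equiv> (Gd, True)"  abbreviation "lD \<equiv> (Gd, False)"

definition letters :: "letter list" where
  "letters = [la, lA, lb, lB, lc, lC, ld, lD]"

definition cancellation_rules :: "(word \<times> word) list" where
  "cancellation_rules = map (\<lambda>x. ([x, inv_letter x], [])) letters"

text \<open>Each rule \<open>l \<rightarrow> r\<close> splits a cyclic conjugate of the relator or of its inverse as \<open>l r\<inverse>\<close>.\<close>

definition relator_rules :: "(word \<times> word) list" where
  "relator_rules =
    [([lb,la,lB,lA],[lc,ld,lC,lD]), ([lb,lA,lB,lc],[lA,ld,lc,lD]), ([lB,lA,ld,lc],[lA,lB,lc,ld]),
     ([lB,lc,ld,lC],[la,lB,lA,ld]), ([ld,lc,lD,lC],[la,lb,lA,lB]), ([ld,lC,lD,la],[lC,lb,la,lB]),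
     ([lD,la,lb,lA],[lc,lD,lC,lb]), ([lD,lC,lb,la],[lC,lD,la,lb])]"

definition gamma2_rules :: "(word \<times> word) list" where
  "gamma2_rules = cancellation_rules @ relator_rules"

abbreviation gamma2_step :: "word \<Rightarrow> word \<Rightarrow> bool" where
  "gamma2_step \<equiv> srs_step (set gamma2_rules)"

definition gamma2_reduced :: "word \<Rightarrow> bool" where
  "gamma2_reduced w \<longleftrightarrow> (\<nexists>v. gamma2_step w v)"

fun letter_rank :: "letter \<Rightarrow> nat" where
  "letter_rank (Ga, True) = 0" | "letter_rank (Ga, False) = 1"
| "letter_rank (Gc, True) = 2" | "letter_rank (Gc, False) = 3"
| "letter_rank (Gb, True) = 4" | "letter_rank (Gb, False) = 5"
| "letter_rank (Gd, True) = 6" | "letter_rank (Gd, False) = 7"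

lemma gamma2_rules_lenlex:
  "(l, r) \<in> set gamma2_rules \<Longrightarrow> (r, l) \<in> lenlex (inv_image less_than letter_rank)"
  by (auto simp: gamma2_rules_def cancellation_rules_def relator_rules_def letters_def
      inv_letter_def Cons_lenlex_iff)

lemma gamma2_critical_pairs: "critical_pairs_joinable (set gamma2_rules)"
  by (rule critical_pairs_check_joinable[of 20]) code_simp

lemma gamma2_confluent:
  "gamma2_step\<^sup>*\<^sup>* x y \<Longrightarrow> gamma2_step\<^sup>*\<^sup>* x z \<Longrightarrow> joinable gamma2_step y z"
  by (rule srs_confluent[OF wf_inv_image[OF wf_less_than, of letter_rank]])
    (simp_all add: gamma2_rules_lenlex gamma2_critical_pairs)

lemma letters_complete: "x \<in> set letters"
proof (cases x)
  case (Pair g b)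
  then show ?thesis by (cases g; cases b) (simp_all add: letters_def)
qed

lemma cancellation_rule_mem: "([x, inv_letter x], []) \<in> set gamma2_rules"
  using letters_complete unfolding gamma2_rules_def cancellation_rules_def by auto

lemma relator_rules_cyclic_conjugates:
  "list_all (\<lambda>(l, r). length l = 4 \<and> (\<exists>k \<in> set [0..<8].
     l @ inv_word r = rotate k relator \<or> l @ inv_word r = rotate k (inv_word relator)))
   relator_rules"
  by code_simp

lemma gamma2_rule_cases:
  assumes "(l, r) \<in> set gamma2_rules"
  obtains (cancellation) x where "l = [x, inv_letter x]" and "r = []"
  | (relator) k where "length l = 4"
      and "l @ inv_word r = rotate k relator \<or> l @ inv_word r = rotate k (inv_word relator)"
  using assms relator_rules_cyclic_conjugates
  unfolding gamma2_rules_def cancellation_rules_def list_all_iff by fastforce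

lemma gamma2_reduced_short: "length w < 2 \<Longrightarrow> gamma2_reduced w"
  unfolding gamma2_reduced_def
  by (auto elim!: srs_step.cases elim: gamma2_rule_cases)

lemma relator_reduces_to_Nil: "gamma2_step\<^sup>*\<^sup>* relator []"
proof -
  have "normalize gamma2_rules 20 relator = []" by code_simp
  then show ?thesis using srs_steps_normalize[of gamma2_rules relator 20] by simp
qed

lemma gamma2_rule_geq:
  assumes "(l, r) \<in> set gamma2_rules"
  shows "geq l r"
  using assms
proof (cases rule: gamma2_rule_cases)
  case (cancellation x)
  then show ?thesis using geq_cancel[of "[]" x "[]"] by simp
next
  case (relator k)
  then have "geq (l @ inv_word r) []"
    using geq_Nil_rotate geq_relator geq_inv_relator by auto
  then show ?thesis by (rule geq_if_append_inv_word_Nil)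
qed

lemma gamma2_rule_shortens_or_Rword:
  assumes "(l, r) \<in> set gamma2_rules"
  shows "length r < length l \<or> (length l = 4 \<and> l \<in> Rwords)"
  using assms
proof (cases rule: gamma2_rule_cases)
  case (relator k)
  then have "rotate k relator = [] @ l @ inv_word r \<or>
      rotate k (inv_word relator) = [] @ l @ inv_word r"
    by auto
  then have "l \<in> Rwords" using relator(1) unfolding Rwords_def by fastforce
  then show ?thesis using relator(1) by simp
qed simp

lemma elem_step_equivclp_gamma2: "elem_step u v \<Longrightarrow> equivclp gamma2_step u v"
proof (induction rule: elem_step.induct)
  case (cancel u l v)
  show ?case
    using srs_step.intros[OF cancellation_rule_mem[of l], where p = u and q = v] by auto
next
  case (rel u v)
  show ?case
    using srs_steps_append_context[OF relator_reduces_to_Nil, of u v]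
    by (simp add: rtranclp_into_equivclp)
qed

lemma geq_imp_equivclp_gamma2: "geq u v \<Longrightarrow> equivclp gamma2_step u v"
  unfolding geq_eq_equivclp
proof (induction rule: equivclp_induct)
  case (step y z)
  then show ?case
    by (meson elem_step_equivclp_gamma2 equivclp_sym equivclp_trans)
qed simp

lemma gamma2_reduced_unique:
  "geq u v \<Longrightarrow> gamma2_reduced u \<Longrightarrow> gamma2_reduced v \<Longrightarrow> u = v"
  unfolding gamma2_reduced_def
  by (rule equivclp_normal_forms_eq[OF gamma2_confluent geq_imp_equivclp_gamma2])

section \<open>Word length and geodesics\<close>

lemma wlen_le_length: "geq v w \<Longrightarrow> wlen w \<le> length v"
  unfolding wlen_def by (rule Least_le) blast

lemma wlen_cong: "geq u w \<Longrightarrow> wlen u = wlen w"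
  unfolding wlen_def using geq_sym geq_trans by metis

lemma geodesic_representative:
  obtains v where "geq v w" and "geodesic v"
proof -
  have "\<exists>v. geq v w \<and> length v = wlen w"
    unfolding wlen_def by (rule LeastI_ex) (blast intro: geq_refl)
  then show ?thesis using that wlen_cong unfolding geodesic_def by metis
qed

lemma wlen_append_le: "wlen (u @ v) \<le> wlen u + wlen v"
proof -
  obtain u' v' where "geq u' u" "geodesic u'" "geq v' v" "geodesic v'"
    by (meson geodesic_representative)
  then show ?thesis
    using wlen_le_length[OF geq_append] wlen_cong unfolding geodesic_def by (metis length_append)
qed

lemma wlen_letter: "wlen [a] = 1"
proof -
  obtain v where v: "geq v [a]" "geodesic v" by (rule geodesic_representative)
  have "length v \<le> 1" using v wlen_le_length[OF geq_refl, of "[a]"] unfolding geodesic_def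
    by (simp add: wlen_cong)
  then have "v = [a]"
    using gamma2_reduced_unique[OF v(1)] gamma2_reduced_short by simp
  then show ?thesis using v(2) unfolding geodesic_def by simp
qed

lemma geodesic_gamma2_reduced:
  assumes "geodesic v" and "geq v y" and "Rset y = {}"
  shows "gamma2_reduced v"
  unfolding gamma2_reduced_def
proof
  assume "\<exists>v'. gamma2_step v v'"
  then obtain p l r q where v: "v = p @ l @ q" and R: "(l, r) \<in> set gamma2_rules"
    by (auto elim: srs_step.cases)
  from gamma2_rule_shortens_or_Rword[OF R] show False
  proof
    assume "length r < length l"
    moreover have "geq (p @ r @ q) v"
      using v geq_append_context[OF geq_sym[OF gamma2_rule_geq[OF R]]] by simp
    ultimately show False
      using assms(1) wlen_le_length v unfolding geodesic_def by fastforce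
  next
    assume "length l = 4 \<and> l \<in> Rwords"
    then have "l \<in> Rset y" unfolding Rset_def using assms(1,2) v by blast
    then show False using assms(3) by simp
  qed
qed

lemma geodesic_unique_if_Rset_empty:
  assumes "Rset y = {}" and "geq v y" "geodesic v" and "geq v' y" "geodesic v'"
  shows "v = v'"
  using assms geodesic_gamma2_reduced gamma2_reduced_unique geq_sym geq_trans by metis

lemma wlen_le_Suc_wlen_Cons: "wlen y \<le> Suc (wlen (inv_letter a # y))"
  using wlen_append_le[of "[a]" "inv_letter a # y"] wlen_cong[OF geq_cancel_Cons[of a y]]
  by (simp add: wlen_letter)

lemma wlen_Cons_inv_letter_iff_hd:
  assumes "Rset y = {}" and w: "geq w y" "geodesic w" "w \<noteq> []"
  shows "wlen y = Suc (wlen (inv_letter a # y)) \<longleftrightarrow> hd w = a"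
proof
  assume shorter: "wlen y = Suc (wlen (inv_letter a # y))"
  obtain v where v: "geq v (inv_letter a # y)" "geodesic v" by (rule geodesic_representative)
  have "geq (a # v) (a # inv_letter a # y)"
    using geq_append_context[OF v(1), of "[a]" "[]"] by simp
  then have av: "geq (a # v) y" using geq_cancel_Cons geq_trans by blast
  moreover have "geodesic (a # v)"
    using v(2) shorter wlen_cong[OF av] wlen_cong[OF v(1)] unfolding geodesic_def by simp
  ultimately have "a # v = w" using geodesic_unique_if_Rset_empty assms by blast
  then show "hd w = a" by auto
next
  assume "hd w = a"
  then obtain w' where w': "w = a # w'" using w(3) by (cases w) auto
  have "geq (inv_letter a # y) (inv_letter a # w)"
    using geq_append_context[OF geq_sym[OF w(1)], of "[inv_letter a]" "[]"] by simp
  then have "geq w' (inv_letter a # y)"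
    using geq_cancel_Cons_inv[of a w'] w' geq_sym geq_trans by metis
  then have "Suc (wlen (inv_letter a # y)) \<le> wlen y"
    using wlen_le_length w' w(2) wlen_cong[OF w(1)] unfolding geodesic_def by fastforce
  then show "wlen y = Suc (wlen (inv_letter a # y))"
    using wlen_le_Suc_wlen_Cons[of y a] by simp
qed

lemma append_mem_cone_Nil_iff:
  assumes "y \<in> cone_type x" and "[a] \<in> cone_type x"
  shows "x @ y \<in> cone [] (x @ [a]) \<longleftrightarrow> wlen y = Suc (wlen (inv_letter a # y))"
proof -
  have "geq (inv_word (x @ [a]) @ x @ y) ([inv_letter a] @ [] @ y)"
    using geq_append_context[OF geq_inv_word_append[of x], of "[inv_letter a]" y]
    by (simp add: inv_word_def)
  then have "wdist (x @ [a]) (x @ y) = wlen (inv_letter a # y)"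
    unfolding wdist_def using wlen_cong by simp
  then show ?thesis
    using assms wlen_letter[of a] unfolding cone_def cone_type_def
    by (simp add: wdist_def inv_word_def)
qed

theorem lemma6p1:
  fixes x y w :: word and a :: letter
  assumes "y \<in> cone_type x"
    and "\<not> geq y []"
    and "Rset y = {}"
    and "geq w y" and "geodesic w"
    and "[a] \<in> gens \<inter> cone_type x"
  shows "(x @ y) \<in> cone [] (x @ [a]) \<longleftrightarrow> hd w = a"
proof -
  have "w \<noteq> []" using assms(2,4) geq_sym by blast
  then show ?thesis
    using append_mem_cone_Nil_iff[OF assms(1)] assms(6)
      wlen_Cons_inv_letter_iff_hd[OF assms(3,4,5)] by simp
qed

end
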